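(* Let $R$ be a ring and $N$ a right $R$-module with a filtration $(N_\alpha \mid \alpha \leq \tau)$ (for some ordinal $\tau$). Let $M$ be a finitely generated right $R$-module such that for each $\alpha < \tau$, each submodule $K$ with $N_\alpha \subseteq K \subseteq N_{\alpha+1}$, and each $f \in \mathrm{Hom}_R(M, N_{\alpha+1}/K)$, there exists $g \in \mathrm{Hom}_R(M, N_{\alpha+1})$ with $f = \pi_K g$, where $\pi_K : N_{\alpha+1} \to N_{\alpha+1}/K$ is the canonical projection. Then $M$ is $N$-projective.
   Context: A chain $(N_\alpha \mid \alpha \leq \tau)$ of submodules of $N$ is a filtration of $N$ if $\tau$ is an ordinal, $N_0 = 0$, $N_\alpha \subseteq N_{\alpha+1}$ for each $\alpha < \tau$, $N_\alpha = \bigcup_{\beta<\alpha} N_\beta$ for each limit ordinal $\alpha \leq \tau$, and $N_\tau = N$. A module $M$ is $N$-projective if for every submodule $P \subseteq N$, every homomorphism $M \to N/P$ factors through the canonical projection $N \to N/P$. *)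

theory Defs
  imports Main
begin

text \<open>A module is given by a carrier set inside an ambient abelian group type 'm
  (whose addition, zero and negation are the module operations) together with a
  right scalar action s :: 'm => 'r => 'm, written s x r for x r.\<close>

definition right_module :: "('m::ab_group_add \<Rightarrow> 'r::ring_1 \<Rightarrow> 'm) \<Rightarrow> 'm set \<Rightarrow> bool" where
  "right_module s M \<longleftrightarrow>
     0 \<in> M \<and> (\<forall>x\<in>M. \<forall>y\<in>M. x + y \<in> M) \<and> (\<forall>x\<in>M. - x \<in> M) \<and>
     (\<forall>x\<in>M. \<forall>r. s x r \<in> M) \<and>
     (\<forall>x\<in>M. \<forall>y\<in>M. \<forall>r. s (x + y) r = s x r + s y r) \<and>
     (\<forall>x\<in>M. \<forall>r r'. s x (r + r') = s x r + s x r') \<and>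
     (\<forall>x\<in>M. \<forall>r r'. s x (r * r') = s (s x r) r') \<and>
     (\<forall>x\<in>M. s x 1 = x)"

definition submodule :: "('m::ab_group_add \<Rightarrow> 'r::ring_1 \<Rightarrow> 'm) \<Rightarrow> 'm set \<Rightarrow> 'm set \<Rightarrow> bool" where
  "submodule s P M \<longleftrightarrow> P \<subseteq> M \<and> right_module s P"

definition finitely_generated :: "('m::ab_group_add \<Rightarrow> 'r::ring_1 \<Rightarrow> 'm) \<Rightarrow> 'm set \<Rightarrow> bool" where
  "finitely_generated s M \<longleftrightarrow>
     (\<exists>G. finite G \<and> G \<subseteq> M \<and> (\<forall>P. submodule s P M \<and> G \<subseteq> P \<longrightarrow> P = M))"

definition mod_hom :: "('m::ab_group_add \<Rightarrow> 'r::ring_1 \<Rightarrow> 'm) \<Rightarrow> 'm set \<Rightarrow>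
    ('n::ab_group_add \<Rightarrow> 'r \<Rightarrow> 'n) \<Rightarrow> 'n set \<Rightarrow> ('m \<Rightarrow> 'n) \<Rightarrow> bool" where
  "mod_hom sM M sN N g \<longleftrightarrow>
     (\<forall>x\<in>M. g x \<in> N) \<and> (\<forall>x\<in>M. \<forall>y\<in>M. g (x + y) = g x + g y) \<and>
     (\<forall>x\<in>M. \<forall>r. g (sM x r) = sN (g x) r)"

text \<open>Quotient module N/P: its elements are the cosets x + P (x in N), with the
  induced operations.\<close>
definition coset :: "'n::ab_group_add \<Rightarrow> 'n set \<Rightarrow> 'n set" where
  "coset x P = (\<lambda>p. x + p) ` P"

definition quot :: "'n::ab_group_add set \<Rightarrow> 'n set \<Rightarrow> 'n set set" where
  "quot N P = {coset x P | x. x \<in> N}"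

definition quot_add :: "'n::ab_group_add set \<Rightarrow> 'n set \<Rightarrow> 'n set" where
  "quot_add C D = {a + b | a b. a \<in> C \<and> b \<in> D}"

definition quot_scal :: "('n::ab_group_add \<Rightarrow> 'r \<Rightarrow> 'n) \<Rightarrow> 'n set \<Rightarrow> 'n set \<Rightarrow> 'r \<Rightarrow> 'n set" where
  "quot_scal sN P C r = {sN a r + p | a p. a \<in> C \<and> p \<in> P}"

definition quot_hom :: "('m::ab_group_add \<Rightarrow> 'r::ring_1 \<Rightarrow> 'm) \<Rightarrow> 'm set \<Rightarrow>
    ('n::ab_group_add \<Rightarrow> 'r \<Rightarrow> 'n) \<Rightarrow> 'n set \<Rightarrow> 'n set \<Rightarrow> ('m \<Rightarrow> 'n set) \<Rightarrow> bool" where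
  "quot_hom sM M sN N P f \<longleftrightarrow>
     (\<forall>x\<in>M. f x \<in> quot N P) \<and> (\<forall>x\<in>M. \<forall>y\<in>M. f (x + y) = quot_add (f x) (f y)) \<and>
     (\<forall>x\<in>M. \<forall>r. f (sM x r) = quot_scal sN P (f x) r)"

definition N_projective :: "('m::ab_group_add \<Rightarrow> 'r::ring_1 \<Rightarrow> 'm) \<Rightarrow> 'm set \<Rightarrow>
    ('n::ab_group_add \<Rightarrow> 'r \<Rightarrow> 'n) \<Rightarrow> 'n set \<Rightarrow> bool" where
  "N_projective sM M sN N \<longleftrightarrow>
     (\<forall>P f. submodule sN P N \<and> quot_hom sM M sN N P f \<longrightarrow>
        (\<exists>g. mod_hom sM M sN N g \<and> (\<forall>x\<in>M. f x = coset (g x) P)))"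

text \<open>Ordinals: indices alpha <= tau in an arbitrary well-ordered type 'i.
  Successor alpha+1 is the least element above alpha; zero is the least element.\<close>
definition osucc :: "'i::wellorder \<Rightarrow> 'i" where
  "osucc a = (LEAST b. a < b)"

definition is_limit :: "'i::wellorder \<Rightarrow> bool" where
  "is_limit a \<longleftrightarrow> (\<exists>b. b < a) \<and> (\<forall>b<a. \<exists>c. b < c \<and> c < a)"

definition filtration :: "('n::ab_group_add \<Rightarrow> 'r::ring_1 \<Rightarrow> 'n) \<Rightarrow> 'n set \<Rightarrow>
    'i::wellorder \<Rightarrow> ('i \<Rightarrow> 'n set) \<Rightarrow> bool" where
  "filtration sN N \<tau> Nf \<longleftrightarrow>
     (\<forall>a\<le>\<tau>. submodule sN (Nf a) N) \<and>
     (\<forall>a. (\<forall>b. a \<le> b) \<longrightarrow> Nf a = {0}) \<and>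
     (\<forall>a<\<tau>. Nf a \<subseteq> Nf (osucc a)) \<and>
     (\<forall>a\<le>\<tau>. is_limit a \<longrightarrow> Nf a = (\<Union>b\<in>{b. b < a}. Nf b)) \<and>
     Nf \<tau> = N"

end

theory Submission
  imports Defs
begin

(*
  By well-founded induction on \<alpha> \<le> \<tau> one shows: every homomorphism f : M \<rightarrow> N/P all of whose
  values (cosets) meet N\<^sub>\<alpha> lifts to a homomorphism M \<rightarrow> N; for \<alpha> = \<tau> this is N-projectivity.
  At the least index f = 0. At a limit \<alpha> the values of the finitely many generators of M
  already meet some N\<^sub>\<beta> with \<beta> < \<alpha>, and the elements whose values meet N\<^sub>\<beta> form a
  submodule, so all values do. At \<alpha> = \<beta> + 1 pick representatives n x \<in> f x \<inter> N\<^sub>\<alpha>: modulo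
  K = (N\<^sub>\<beta> + P) \<inter> N\<^sub>\<alpha> they form a homomorphism M \<rightarrow> N\<^sub>\<alpha>/K, which the hypothesis lifts to
  g : M \<rightarrow> N\<^sub>\<alpha>. Then n - g takes values in K, so the cosets of n - g meet N\<^sub>\<beta> and by
  induction lift to some h; finally g + h lifts f.
*)

lemma right_module_zero_mem: "right_module s M \<Longrightarrow> 0 \<in> M"
  and right_module_add_mem: "right_module s M \<Longrightarrow> x \<in> M \<Longrightarrow> y \<in> M \<Longrightarrow> x + y \<in> M"
  and right_module_neg_mem: "right_module s M \<Longrightarrow> x \<in> M \<Longrightarrow> - x \<in> M"
  and right_module_scal_mem: "right_module s M \<Longrightarrow> x \<in> M \<Longrightarrow> s x r \<in> M"
  and right_module_scal_add: "right_module s M \<Longrightarrow> x \<in> M \<Longrightarrow> y \<in> M \<Longrightarrow> s (x + y) r = s x r + s y r"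
  by (simp_all add: right_module_def)

lemma right_module_diff_mem: "right_module s M \<Longrightarrow> x \<in> M \<Longrightarrow> y \<in> M \<Longrightarrow> x - y \<in> M"
  by (metis diff_conv_add_uminus right_module_add_mem right_module_neg_mem)

lemma right_module_zero_scal: "right_module s M \<Longrightarrow> s 0 r = 0"
  using right_module_scal_add[of s M 0 0 r] right_module_zero_mem[of s M] by simp

lemma right_module_scal_zero:
  assumes "right_module s M" "x \<in> M"
  shows "s x 0 = 0"
proof -
  have "s x (0 + 0) = s x 0 + s x 0" using assms unfolding right_module_def by blast
  then show ?thesis by simp
qed

lemma right_module_scal_minus_one:
  assumes "right_module s M" "x \<in> M"
  shows "s x (- 1) = - x"
proof -
  have "s x (1 + - 1) = s x 1 + s x (- 1)" "s x 1 = x"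
    using assms unfolding right_module_def by blast+
  then have "x + s x (- 1) = 0" using right_module_scal_zero[OF assms] by simp
  then show ?thesis by (simp add: eq_neg_iff_add_eq_0 add.commute)
qed

lemma right_module_scal_diff:
  assumes "right_module s M" "x \<in> M" "y \<in> M"
  shows "s (x - y) r = s x r - s y r"
proof -
  have "s (x - y) r + s y r = s x r"
    using assms right_module_scal_add[of s M "x - y" y r] right_module_diff_mem by fastforce
  then show ?thesis by (simp add: eq_diff_eq)
qed

lemma submoduleI:
  assumes "right_module s M" "K \<subseteq> M" "0 \<in> K"
    and "\<And>x y. x \<in> K \<Longrightarrow> y \<in> K \<Longrightarrow> x + y \<in> K"
    and "\<And>x r. x \<in> K \<Longrightarrow> s x r \<in> K"
  shows "submodule s K M"
proof -
  have "- x \<in> K" if "x \<in> K" for x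
    using assms(5)[of x "- 1"] assms(2) that right_module_scal_minus_one[OF assms(1)] by auto
  with assms show ?thesis unfolding submodule_def right_module_def by (auto simp: subset_iff)
qed

lemma mem_coset_iff: "z \<in> coset x P \<longleftrightarrow> z - x \<in> P"
  unfolding coset_def by (auto simp: image_iff) (metis add_diff_cancel_left' diff_add_cancel add.commute)

lemma coset_self: "right_module s P \<Longrightarrow> x \<in> coset x P"
  by (simp add: mem_coset_iff right_module_zero_mem)

lemma coset_eq_iff:
  assumes "right_module s P"
  shows "coset x P = coset y P \<longleftrightarrow> x - y \<in> P"
proof
  assume "coset x P = coset y P"
  then show "x - y \<in> P" using coset_self[OF assms, of x] by (simp add: mem_coset_iff)
next
  assume "x - y \<in> P"
  then have "z - x \<in> P \<longleftrightarrow> z - y \<in> P" for z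
    using right_module_add_mem[OF assms, of "z - x" "x - y"] right_module_diff_mem[OF assms, of "z - y" "x - y"]
    by auto
  then show "coset x P = coset y P" by (auto simp: mem_coset_iff)
qed

lemma quot_eq_coset: "right_module s P \<Longrightarrow> C \<in> quot N P \<Longrightarrow> n \<in> C \<Longrightarrow> C = coset n P"
  unfolding quot_def using coset_eq_iff[of s P] mem_coset_iff[of n _ P] by auto

lemma quot_add_coset:
  assumes "right_module s P"
  shows "quot_add (coset x P) (coset y P) = coset (x + y) P"
proof (rule set_eqI)
  fix z
  have "z \<in> quot_add (coset x P) (coset y P)" if "z - (x + y) \<in> P"
    using that coset_self[OF assms, of x] unfolding quot_add_def mem_coset_iff
    by (intro CollectI exI[of _ x] exI[of _ "z - x"]) (simp add: algebra_simps)
  moreover have "z - (x + y) \<in> P" if z: "z \<in> quot_add (coset x P) (coset y P)"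
  proof -
    obtain a b where "z = a + b" "a - x \<in> P" "b - y \<in> P"
      using z unfolding quot_add_def mem_coset_iff by blast
    then show ?thesis
      using right_module_add_mem[OF assms, of "a - x" "b - y"] by (simp add: algebra_simps)
  qed
  ultimately show "z \<in> quot_add (coset x P) (coset y P) \<longleftrightarrow> z \<in> coset (x + y) P"
    by (auto simp: mem_coset_iff)
qed

lemma quot_scal_coset:
  assumes "right_module s N" "submodule s P N" "x \<in> N"
  shows "quot_scal s P (coset x P) r = coset (s x r) P"
proof (rule set_eqI)
  fix z
  have P: "right_module s P" "P \<subseteq> N" using assms(2) by (auto simp: submodule_def)
  have "z \<in> quot_scal s P (coset x P) r" if "z - s x r \<in> P"
  proof -
    have "z = s x r + (z - s x r)" by simp
    with that coset_self[OF P(1), of x] show ?thesis unfolding quot_scal_def by blast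
  qed
  moreover have "z - s x r \<in> P" if z: "z \<in> quot_scal s P (coset x P) r"
  proof -
    obtain a p where a: "z = s a r + p" "a - x \<in> P" "p \<in> P"
      using z unfolding quot_scal_def mem_coset_iff by blast
    have "a = (a - x) + x" by simp
    then have "a \<in> N" using right_module_add_mem[OF assms(1)] a(2) P(2) assms(3) by (metis subsetD)
    then have "s a r - s x r = s (a - x) r"
      using right_module_scal_diff[OF assms(1) _ assms(3)] by simp
    then have "z - s x r = s (a - x) r + p" using a(1) by (simp add: algebra_simps)
    then show ?thesis
      using a right_module_add_mem[OF P(1)] right_module_scal_mem[OF P(1)] by metis
  qed
  ultimately show "z \<in> quot_scal s P (coset x P) r \<longleftrightarrow> z \<in> coset (s x r) P"
    by (auto simp: mem_coset_iff)
qed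

lemma submodule_inter_sum:
  assumes N: "right_module s N" and "submodule s P N" "submodule s D N" "submodule s A N" "D \<subseteq> A"
  shows "submodule s {k \<in> A. \<exists>m\<in>D. \<exists>p\<in>P. k = m + p} A"
proof -
  have P: "right_module s P" "P \<subseteq> N" and D: "right_module s D" "D \<subseteq> N"
    and A: "right_module s A" "A \<subseteq> N"
    using assms by (auto simp: submodule_def)
  show ?thesis
  proof (rule submoduleI[OF A(1)])
    show "0 \<in> {k \<in> A. \<exists>m\<in>D. \<exists>p\<in>P. k = m + p}"
      using right_module_zero_mem[OF A(1)] right_module_zero_mem[OF D(1)] right_module_zero_mem[OF P(1)]
      by force
  next
    fix x y assume "x \<in> {k \<in> A. \<exists>m\<in>D. \<exists>p\<in>P. k = m + p}" "y \<in> {k \<in> A. \<exists>m\<in>D. \<exists>p\<in>P. k = m + p}"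
    then obtain m p m' p' where mp: "x \<in> A" "y \<in> A" "m \<in> D" "p \<in> P" "m' \<in> D" "p' \<in> P"
      "x = m + p" "y = m' + p'" by blast
    then have "x + y = (m + m') + (p + p')" by (simp add: algebra_simps)
    then show "x + y \<in> {k \<in> A. \<exists>m\<in>D. \<exists>p\<in>P. k = m + p}"
      using mp right_module_add_mem[OF A(1)] right_module_add_mem[OF D(1)] right_module_add_mem[OF P(1)]
      by blast
  next
    fix x r assume "x \<in> {k \<in> A. \<exists>m\<in>D. \<exists>p\<in>P. k = m + p}"
    then obtain m p where mp: "x \<in> A" "m \<in> D" "p \<in> P" "x = m + p" by blast
    then have "s x r = s m r + s p r" using right_module_scal_add[OF N] P(2) D(2) by blast
    then show "s x r \<in> {k \<in> A. \<exists>m\<in>D. \<exists>p\<in>P. k = m + p}"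
      using mp right_module_scal_mem[OF A(1)] right_module_scal_mem[OF D(1)] right_module_scal_mem[OF P(1)]
      by blast
  qed (use assms in auto)
qed

lemma subset_inter_sum:
  assumes "right_module s D" "right_module s P" "D \<subseteq> A"
  shows "D \<subseteq> {k \<in> A. \<exists>m\<in>D. \<exists>p\<in>P. k = m + p}"
    and "A \<inter> P \<subseteq> {k \<in> A. \<exists>m\<in>D. \<exists>p\<in>P. k = m + p}"
proof -
  show "D \<subseteq> {k \<in> A. \<exists>m\<in>D. \<exists>p\<in>P. k = m + p}"
    using assms(3) right_module_zero_mem[OF assms(2)] by (force intro: bexI[of _ 0])
  show "A \<inter> P \<subseteq> {k \<in> A. \<exists>m\<in>D. \<exists>p\<in>P. k = m + p}"
    using right_module_zero_mem[OF assms(1)] by (force intro: bexI[of _ 0])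
qed

lemma quot_hom_cosetI:
  assumes L: "right_module sN L" and QL: "submodule sN Q L"
    and "\<And>x. x \<in> M \<Longrightarrow> c x \<in> L"
    and "\<And>x y. x \<in> M \<Longrightarrow> y \<in> M \<Longrightarrow> c (x + y) - (c x + c y) \<in> Q"
    and "\<And>x r. x \<in> M \<Longrightarrow> c (sM x r) - sN (c x) r \<in> Q"
  shows "quot_hom sM M sN L Q (\<lambda>x. coset (c x) Q)"
proof -
  have Q: "right_module sN Q" using QL by (simp add: submodule_def)
  show ?thesis unfolding quot_hom_def
  proof (intro conjI ballI allI)
    fix x assume "x \<in> M"
    then show "coset (c x) Q \<in> quot L Q" using assms(3) unfolding quot_def by blast
  next
    fix x y assume "x \<in> M" "y \<in> M"
    then show "coset (c (x + y)) Q = quot_add (coset (c x) Q) (coset (c y) Q)"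
      using quot_add_coset[OF Q] coset_eq_iff[OF Q] assms(4) by simp
  next
    fix x r assume "x \<in> M"
    then show "coset (c (sM x r)) Q = quot_scal sN Q (coset (c x) Q) r"
      using quot_scal_coset[OF L QL] assms(3) coset_eq_iff[OF Q] assms(5) by simp
  qed
qed

lemma quot_hom_representative:
  assumes M: "right_module sM M" and N: "right_module sN N" and PN: "submodule sN P N"
    and f: "quot_hom sM M sN N P f" and n: "\<And>x. x \<in> M \<Longrightarrow> n x \<in> f x"
  shows quot_hom_representative_coset: "\<And>x. x \<in> M \<Longrightarrow> f x = coset (n x) P"
    and quot_hom_representative_mem: "\<And>x. x \<in> M \<Longrightarrow> n x \<in> N"
    and quot_hom_representative_add: "\<And>x y. x \<in> M \<Longrightarrow> y \<in> M \<Longrightarrow> n (x + y) - (n x + n y) \<in> P"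
    and quot_hom_representative_scal: "\<And>x r. x \<in> M \<Longrightarrow> n (sM x r) - sN (n x) r \<in> P"
proof -
  have P: "right_module sN P" "P \<subseteq> N" using PN by (auto simp: submodule_def)
  have fq: "\<And>x. x \<in> M \<Longrightarrow> f x \<in> quot N P" using f by (simp add: quot_hom_def)
  show coset: "f x = coset (n x) P" if "x \<in> M" for x
    using quot_eq_coset[OF P(1) fq[OF that] n[OF that]] .
  show mem: "n x \<in> N" if x: "x \<in> M" for x
  proof -
    obtain m where "m \<in> N" "f x = coset m P" using fq[OF x] unfolding quot_def by blast
    then have "n x - m \<in> P" "n x = (n x - m) + m" using n[OF x] by (simp_all add: mem_coset_iff)
    then show ?thesis using right_module_add_mem[OF N] \<open>m \<in> N\<close> P(2) by (metis subsetD)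
  qed
  show "n (x + y) - (n x + n y) \<in> P" if "x \<in> M" "y \<in> M" for x y
  proof -
    have "coset (n (x + y)) P = f (x + y)" using coset right_module_add_mem[OF M that] by simp
    also have "\<dots> = quot_add (f x) (f y)" using f that by (simp add: quot_hom_def)
    also have "\<dots> = coset (n x + n y) P" using coset that quot_add_coset[OF P(1)] by simp
    finally show ?thesis using coset_eq_iff[OF P(1)] by blast
  qed
  show "n (sM x r) - sN (n x) r \<in> P" if "x \<in> M" for x r
  proof -
    have "coset (n (sM x r)) P = f (sM x r)" using coset right_module_scal_mem[OF M that] by simp
    also have "\<dots> = quot_scal sN P (f x) r" using f that by (simp add: quot_hom_def)
    also have "\<dots> = coset (sN (n x) r) P" using coset that quot_scal_coset[OF N PN mem[OF that]] by simp
    finally show ?thesis using coset_eq_iff[OF P(1)] by blast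
  qed
qed

lemma quot_hom_restrict:
  assumes M: "right_module sM M" and N: "right_module sN N" and PN: "submodule sN P N"
    and f: "quot_hom sM M sN N P f" and n: "\<And>x. x \<in> M \<Longrightarrow> n x \<in> f x"
    and AN: "submodule sN A N" and nA: "\<And>x. x \<in> M \<Longrightarrow> n x \<in> A"
    and KA: "submodule sN K A" and PK: "A \<inter> P \<subseteq> K"
  shows "quot_hom sM M sN A K (\<lambda>x. coset (n x) K)"
proof (rule quot_hom_cosetI[OF _ KA nA])
  show A: "right_module sN A" using AN by (simp add: submodule_def)
  show "n (x + y) - (n x + n y) \<in> K" if "x \<in> M" "y \<in> M" for x y
  proof -
    have "n (x + y) - (n x + n y) \<in> A"
      using nA[OF right_module_add_mem[OF M that]] nA[OF that(1)] nA[OF that(2)]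
      by (intro right_module_diff_mem[OF A] right_module_add_mem[OF A])
    then show ?thesis using PK quot_hom_representative_add[OF M N PN f n that] by blast
  qed
  show "n (sM x r) - sN (n x) r \<in> K" if "x \<in> M" for x r
  proof -
    have "n (sM x r) - sN (n x) r \<in> A"
      using nA[OF right_module_scal_mem[OF M that]] nA[OF that]
      by (intro right_module_diff_mem[OF A] right_module_scal_mem[OF A])
    then show ?thesis using PK quot_hom_representative_scal[OF M N PN f n that] by blast
  qed
qed

lemma quot_hom_meet_submodule:
  assumes M: "right_module sM M" and N: "right_module sN N" and PN: "submodule sN P N"
    and QN: "submodule sN Q N" and f: "quot_hom sM M sN N P f"
  shows "submodule sM {x \<in> M. f x \<inter> Q \<noteq> {}} M"
proof -
  have P: "right_module sN P" "P \<subseteq> N" and Q: "right_module sN Q" "Q \<subseteq> N"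
    using PN QN by (auto simp: submodule_def)
  have fq: "\<And>x. x \<in> M \<Longrightarrow> f x \<in> quot N P"
    and fa: "\<And>x y. x \<in> M \<Longrightarrow> y \<in> M \<Longrightarrow> f (x + y) = quot_add (f x) (f y)"
    and fs: "\<And>x r. x \<in> M \<Longrightarrow> f (sM x r) = quot_scal sN P (f x) r"
    using f by (simp_all add: quot_hom_def)
  show ?thesis
  proof (rule submoduleI[OF M])
    obtain n where n: "n \<in> N" "f 0 = coset n P"
      using fq[OF right_module_zero_mem[OF M]] unfolding quot_def by blast
    have "f 0 = f (sM 0 0)" using right_module_scal_zero[OF M right_module_zero_mem[OF M]] by simp
    also have "\<dots> = coset (sN n 0) P"
      using fs[OF right_module_zero_mem[OF M]] n quot_scal_coset[OF N PN] by simp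
    finally have "0 \<in> f 0"
      using right_module_scal_zero[OF N n(1)] coset_self[OF P(1)] by simp
    then show "0 \<in> {x \<in> M. f x \<inter> Q \<noteq> {}}"
      using right_module_zero_mem[OF M] right_module_zero_mem[OF Q(1)] by blast
  next
    fix x y assume "x \<in> {x \<in> M. f x \<inter> Q \<noteq> {}}" "y \<in> {x \<in> M. f x \<inter> Q \<noteq> {}}"
    then obtain a b where ab: "x \<in> M" "y \<in> M" "a \<in> f x" "a \<in> Q" "b \<in> f y" "b \<in> Q" by blast
    then have "f (x + y) = coset (a + b) P"
      using fa quot_eq_coset[OF P(1) fq] quot_add_coset[OF P(1)] by metis
    then have "a + b \<in> f (x + y) \<inter> Q" using coset_self[OF P(1)] right_module_add_mem[OF Q(1)] ab by simp
    then show "x + y \<in> {x \<in> M. f x \<inter> Q \<noteq> {}}" using right_module_add_mem[OF M] ab by blast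
  next
    fix x r assume "x \<in> {x \<in> M. f x \<inter> Q \<noteq> {}}"
    then obtain a where a: "x \<in> M" "a \<in> f x" "a \<in> Q" by blast
    then have "f (sM x r) = coset (sN a r) P"
      using fs quot_eq_coset[OF P(1) fq] quot_scal_coset[OF N PN] Q(2) by (metis subsetD)
    then have "sN a r \<in> f (sM x r) \<inter> Q" using coset_self[OF P(1)] right_module_scal_mem[OF Q(1)] a by simp
    then show "sM x r \<in> {x \<in> M. f x \<inter> Q \<noteq> {}}" using right_module_scal_mem[OF M] a by blast
  qed auto
qed

definition liftable :: "('m::ab_group_add \<Rightarrow> 'r::ring_1 \<Rightarrow> 'm) \<Rightarrow> 'm set \<Rightarrow>
    ('n::ab_group_add \<Rightarrow> 'r \<Rightarrow> 'n) \<Rightarrow> 'n set \<Rightarrow> 'n set \<Rightarrow> ('m \<Rightarrow> 'n set) \<Rightarrow> bool" where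
  "liftable sM M sN N P f \<longleftrightarrow> (\<exists>g. mod_hom sM M sN N g \<and> (\<forall>x\<in>M. f x = coset (g x) P))"

lemma liftable_zero:
  assumes "right_module sN N" "\<And>x. x \<in> M \<Longrightarrow> f x = coset 0 P"
  shows "liftable sM M sN N P f"
  unfolding liftable_def
  by (rule exI[of _ "\<lambda>x. 0"])
    (use assms right_module_zero_mem right_module_zero_scal in \<open>auto simp: mod_hom_def\<close>)

lemma mod_hom_add:
  assumes N: "right_module sN N" and "mod_hom sM M sN N g" "mod_hom sM M sN N h"
  shows "mod_hom sM M sN N (\<lambda>x. g x + h x)"
  using assms right_module_add_mem[OF N] right_module_scal_add[OF N]
  unfolding mod_hom_def by (simp add: algebra_simps)

lemma quot_hom_shift:
  assumes M: "right_module sM M" and N: "right_module sN N" and PN: "submodule sN P N"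
    and f: "quot_hom sM M sN N P f" and n: "\<And>x. x \<in> M \<Longrightarrow> n x \<in> f x"
    and g: "mod_hom sM M sN N g"
  shows "quot_hom sM M sN N P (\<lambda>x. coset (n x - g x) P)"
proof -
  have nN: "\<And>x. x \<in> M \<Longrightarrow> n x \<in> N"
    and nadd: "\<And>x y. x \<in> M \<Longrightarrow> y \<in> M \<Longrightarrow> n (x + y) - (n x + n y) \<in> P"
    and nscal: "\<And>x r. x \<in> M \<Longrightarrow> n (sM x r) - sN (n x) r \<in> P"
    using quot_hom_representative[OF M N PN f n] by blast+
  have gN: "\<And>x. x \<in> M \<Longrightarrow> g x \<in> N"
    and gadd: "\<And>x y. x \<in> M \<Longrightarrow> y \<in> M \<Longrightarrow> g (x + y) = g x + g y"
    and gscal: "\<And>x r. x \<in> M \<Longrightarrow> g (sM x r) = sN (g x) r"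
    using g by (simp_all add: mod_hom_def)
  show ?thesis
  proof (rule quot_hom_cosetI[OF N PN])
    show "n x - g x \<in> N" if "x \<in> M" for x
      using right_module_diff_mem[OF N nN[OF that] gN[OF that]] .
    show "n (x + y) - g (x + y) - (n x - g x + (n y - g y)) \<in> P" if "x \<in> M" "y \<in> M" for x y
      using nadd[OF that] gadd[OF that] by (simp add: algebra_simps)
    show "n (sM x r) - g (sM x r) - sN (n x - g x) r \<in> P" if "x \<in> M" for x r
      using nscal[OF that, of r] gscal[OF that] right_module_scal_diff[OF N nN[OF that] gN[OF that]]
      by (simp add: algebra_simps)
  qed
qed

lemma liftable_shift:
  assumes M: "right_module sM M" and N: "right_module sN N" and PN: "submodule sN P N"
    and f: "quot_hom sM M sN N P f" and n: "\<And>x. x \<in> M \<Longrightarrow> n x \<in> f x"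
    and g: "mod_hom sM M sN N g" and shifted: "liftable sM M sN N P (\<lambda>x. coset (n x - g x) P)"
  shows "liftable sM M sN N P f"
proof -
  have P: "right_module sN P" using PN by (simp add: submodule_def)
  obtain h where h: "mod_hom sM M sN N h" "\<And>x. x \<in> M \<Longrightarrow> coset (n x - g x) P = coset (h x) P"
    using shifted unfolding liftable_def by blast
  have "f x = coset (g x + h x) P" if "x \<in> M" for x
  proof -
    have "n x - g x - h x \<in> P" using h(2)[OF that] coset_eq_iff[OF P] by blast
    then show ?thesis
      using quot_hom_representative_coset[OF M N PN f n that] coset_eq_iff[OF P]
      by (simp add: algebra_simps)
  qed
  then show ?thesis using mod_hom_add[OF N g h(1)] unfolding liftable_def by blast
qed

lemma ordinal_cases [case_names least succ limit]:
  fixes a :: "'i::wellorder"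
  obtains "\<forall>b. a \<le> b" | b where "b < a" "a = osucc b" | "is_limit a"
proof -
  assume least: "\<forall>b. a \<le> b \<Longrightarrow> thesis"
    and succ: "\<And>b. b < a \<Longrightarrow> a = osucc b \<Longrightarrow> thesis"
    and limit: "is_limit a \<Longrightarrow> thesis"
  show thesis
  proof (cases "(\<forall>b. a \<le> b) \<or> is_limit a")
    case True
    then show ?thesis using least limit by blast
  next
    case False
    then obtain b where b: "b < a" "\<not> (\<exists>c. b < c \<and> c < a)"
      unfolding is_limit_def by (auto simp: not_le)
    have "a = osucc b" unfolding osucc_def
      by (rule Least_equality[symmetric]) (use b not_less in auto)
    then show ?thesis using succ b(1) by blast
  qed
qed

lemma less_osucc_imp_le: "c < osucc a \<Longrightarrow> a < b \<Longrightarrow> c \<le> a"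
  unfolding osucc_def by (metis Least_le leD not_le_imp_less)

lemma
  assumes "filtration sN N \<tau> Nf"
  shows filtration_submodule: "a \<le> \<tau> \<Longrightarrow> submodule sN (Nf a) N"
    and filtration_least: "\<forall>b. a \<le> b \<Longrightarrow> Nf a = {0}"
    and filtration_osucc: "a < \<tau> \<Longrightarrow> Nf a \<subseteq> Nf (osucc a)"
    and filtration_limit: "a \<le> \<tau> \<Longrightarrow> is_limit a \<Longrightarrow> Nf a = (\<Union>b\<in>{b. b < a}. Nf b)"
    and filtration_top: "Nf \<tau> = N"
  using assms unfolding filtration_def by blast+

lemma filtration_mono:
  assumes F: "filtration sN N \<tau> Nf" and "b \<le> c" "c \<le> \<tau>"
  shows "Nf b \<subseteq> Nf c"
  using assms(2,3)
proof (induction c rule: less_induct)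
  case (less c)
  show ?case
  proof (cases c rule: ordinal_cases)
    case least
    then show ?thesis using less.prems by (metis order.antisym order.refl)
  next
    case (succ d)
    show ?thesis
    proof (cases "b = c")
      case False
      then have "b \<le> d" using less.prems succ less_osucc_imp_le by (metis order.order_iff_strict)
      then have "Nf b \<subseteq> Nf d" using less.IH[of d] succ less.prems by simp
      also have "\<dots> \<subseteq> Nf c"
        using filtration_osucc[OF F] succ less.prems(2) by (metis order.strict_trans2)
      finally show ?thesis .
    qed simp
  next
    case limit
    show ?thesis
    proof (cases "b = c")
      case False
      then have "b < c" using less.prems by simp
      moreover have "Nf c = (\<Union>d\<in>{d. d < c}. Nf d)"
        using filtration_limit[OF F] limit less.prems by blast
      ultimately show ?thesis by blast
    qed simp
  qed
qed

lemma filtration_limit_meets_below: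
  assumes F: "filtration sN N \<tau> Nf" and "a \<le> \<tau>" "is_limit a"
    and "finite H" "\<forall>x\<in>H. S x \<inter> Nf a \<noteq> {}"
  shows "\<exists>b<a. \<forall>x\<in>H. S x \<inter> Nf b \<noteq> {}"
  using assms(4,5)
proof (induction H rule: finite_induct)
  case empty
  then show ?case using \<open>is_limit a\<close> by (auto simp: is_limit_def)
next
  case (insert x H)
  then obtain b where b: "b < a" "\<forall>x\<in>H. S x \<inter> Nf b \<noteq> {}" by auto
  have "Nf a = (\<Union>b\<in>{b. b < a}. Nf b)"
    using filtration_limit[OF F assms(2,3)] .
  then obtain b' where b': "b' < a" "S x \<inter> Nf b' \<noteq> {}" using insert.prems by auto
  have "max b b' \<le> \<tau>" using b(1) b'(1) assms(2) by (simp add: order.strict_implies_order)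
  then have "Nf b \<subseteq> Nf (max b b')" "Nf b' \<subseteq> Nf (max b b')"
    using filtration_mono[OF F] by simp_all
  then have "\<forall>y\<in>insert x H. S y \<inter> Nf (max b b') \<noteq> {}" using b(2) b'(2) by blast
  moreover have "max b b' < a" using b(1) b'(1) by simp
  ultimately show ?case by blast
qed

lemma liftable_successor_step:
  assumes M: "right_module sM M" and N: "right_module sN N" and PN: "submodule sN P N"
    and DN: "submodule sN D N" and AN: "submodule sN A N" and DA: "D \<subseteq> A"
    and proj: "\<And>K g. submodule sN K A \<Longrightarrow> D \<subseteq> K \<Longrightarrow> quot_hom sM M sN A K g \<Longrightarrow>
      liftable sM M sN A K g"
    and IH: "\<And>g. quot_hom sM M sN N P g \<Longrightarrow> \<forall>x\<in>M. g x \<inter> D \<noteq> {} \<Longrightarrow> liftable sM M sN N P g"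
    and f: "quot_hom sM M sN N P f" and meet: "\<forall>x\<in>M. f x \<inter> A \<noteq> {}"
  shows "liftable sM M sN N P f"
proof -
  have P: "right_module sN P" and A: "A \<subseteq> N" and D: "right_module sN D"
    using PN AN DN by (auto simp: submodule_def)
  have "\<forall>x\<in>M. \<exists>y. y \<in> f x \<and> y \<in> A" using meet by blast
  then obtain n where "\<forall>x\<in>M. n x \<in> f x \<and> n x \<in> A" by (auto dest: bchoice)
  then have n: "\<And>x. x \<in> M \<Longrightarrow> n x \<in> f x" and nA: "\<And>x. x \<in> M \<Longrightarrow> n x \<in> A" by simp_all
  define K where "K = {k \<in> A. \<exists>m\<in>D. \<exists>p\<in>P. k = m + p}"
  have KA: "submodule sN K A" unfolding K_def by (rule submodule_inter_sum[OF N PN DN AN DA])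
  have K: "right_module sN K" using KA by (simp add: submodule_def)
  have DK: "D \<subseteq> K" and PK: "A \<inter> P \<subseteq> K"
    unfolding K_def using subset_inter_sum[OF D P DA] by simp_all
  have "quot_hom sM M sN A K (\<lambda>x. coset (n x) K)"
    by (rule quot_hom_restrict[OF M N PN f n AN nA KA PK])
  then obtain g where g: "mod_hom sM M sN A g" and "\<forall>x\<in>M. coset (n x) K = coset (g x) K"
    using proj[OF KA DK] unfolding liftable_def by blast
  then have gK: "\<And>x. x \<in> M \<Longrightarrow> n x - g x \<in> K" using coset_eq_iff[OF K] by blast
  have gN: "mod_hom sM M sN N g" using g A unfolding mod_hom_def by blast
  have "\<forall>x\<in>M. coset (n x - g x) P \<inter> D \<noteq> {}"
  proof
    fix x assume "x \<in> M"
    then obtain m p where "m \<in> D" "p \<in> P" "n x - g x = m + p" using gK unfolding K_def by blast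
    then have "m \<in> coset (n x - g x) P \<inter> D"
      using right_module_neg_mem[OF P] by (simp add: mem_coset_iff)
    then show "coset (n x - g x) P \<inter> D \<noteq> {}" by blast
  qed
  then have "liftable sM M sN N P (\<lambda>x. coset (n x - g x) P)"
    using IH quot_hom_shift[OF M N PN f n gN] by blast
  then show ?thesis using liftable_shift[OF M N PN f n gN] by blast
qed

lemma liftable_limit_step:
  assumes M: "right_module sM M" and N: "right_module sN N" and PN: "submodule sN P N"
    and fg: "finitely_generated sM M" and F: "filtration sN N \<tau> Nf"
    and a: "a \<le> \<tau>" "is_limit a"
    and IH: "\<And>b g. b < a \<Longrightarrow> quot_hom sM M sN N P g \<Longrightarrow> \<forall>x\<in>M. g x \<inter> Nf b \<noteq> {} \<Longrightarrow>
      liftable sM M sN N P g"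
    and f: "quot_hom sM M sN N P f" and meet: "\<forall>x\<in>M. f x \<inter> Nf a \<noteq> {}"
  shows "liftable sM M sN N P f"
proof -
  obtain G where G: "finite G" "G \<subseteq> M" "\<forall>Q. submodule sM Q M \<and> G \<subseteq> Q \<longrightarrow> Q = M"
    using fg unfolding finitely_generated_def by (elim exE conjE)
  have "\<forall>x\<in>G. f x \<inter> Nf a \<noteq> {}" using meet G(2) by blast
  then obtain b where b: "b < a" "\<forall>x\<in>G. f x \<inter> Nf b \<noteq> {}"
    using filtration_limit_meets_below[OF F a G(1)] by blast
  have "b \<le> \<tau>" using b(1) a(1) by simp
  then have "submodule sN (Nf b) N" by (rule filtration_submodule[OF F])
  then have "submodule sM {x \<in> M. f x \<inter> Nf b \<noteq> {}} M"
    by (rule quot_hom_meet_submodule[OF M N PN _ f])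
  moreover have "G \<subseteq> {x \<in> M. f x \<inter> Nf b \<noteq> {}}" using G(2) b(2) by blast
  ultimately have "{x \<in> M. f x \<inter> Nf b \<noteq> {}} = M" using G(3) by blast
  then have "\<forall>x\<in>M. f x \<inter> Nf b \<noteq> {}" by blast
  then show ?thesis by (rule IH[OF b(1) f])
qed

lemma liftable_if_meets_filtration:
  assumes M: "right_module sM M" and N: "right_module sN N" and PN: "submodule sN P N"
    and fg: "finitely_generated sM M" and F: "filtration sN N \<tau> Nf"
    and proj: "\<And>a K g. a < \<tau> \<Longrightarrow> submodule sN K (Nf (osucc a)) \<Longrightarrow> Nf a \<subseteq> K \<Longrightarrow>
      quot_hom sM M sN (Nf (osucc a)) K g \<Longrightarrow> liftable sM M sN (Nf (osucc a)) K g"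
  shows "a \<le> \<tau> \<Longrightarrow> quot_hom sM M sN N P f \<Longrightarrow> \<forall>x\<in>M. f x \<inter> Nf a \<noteq> {} \<Longrightarrow>
    liftable sM M sN N P f"
proof (induction a arbitrary: f rule: less_induct)
  case (less a)
  note sub = filtration_submodule[OF F]
  show ?case
  proof (cases a rule: ordinal_cases)
    case least
    have P: "right_module sN P" using PN by (simp add: submodule_def)
    have "Nf a = {0}" using filtration_least[OF F least] .
    have "f x = coset 0 P" if "x \<in> M" for x
    proof (rule quot_eq_coset[OF P])
      show "f x \<in> quot N P" using less.prems(2) that by (simp add: quot_hom_def)
      show "0 \<in> f x" using less.prems(3) that \<open>Nf a = {0}\<close> by auto
    qed
    then show ?thesis using liftable_zero[OF N] by blast
  next
    case (succ d)
    have d: "d < \<tau>" "d \<le> \<tau>" using succ less.prems(1) by simp_all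
    show ?thesis
    proof (rule liftable_successor_step[OF M N PN sub[OF d(2)] sub[OF less.prems(1)]])
      show "Nf d \<subseteq> Nf a" using filtration_osucc[OF F d(1)] succ(2) by simp
      show "liftable sM M sN (Nf a) K g"
        if "submodule sN K (Nf a)" "Nf d \<subseteq> K" "quot_hom sM M sN (Nf a) K g" for K g
        using proj[OF d(1)] that succ(2) by blast
      show "liftable sM M sN N P g"
        if "quot_hom sM M sN N P g" "\<forall>x\<in>M. g x \<inter> Nf d \<noteq> {}" for g
        using less.IH[OF succ(1) d(2) that] .
    qed (use less.prems in blast)+
  next
    case limit
    show ?thesis
    proof (rule liftable_limit_step[OF M N PN fg F less.prems(1) limit _ less.prems(2,3)])
      show "liftable sM M sN N P g"
        if "b < a" "quot_hom sM M sN N P g" "\<forall>x\<in>M. g x \<inter> Nf b \<noteq> {}" for b g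
        using less.IH that less.prems(1) by simp
    qed
  qed
qed

theorem lemma1p5:
  fixes sM :: "'m::ab_group_add \<Rightarrow> 'r::ring_1 \<Rightarrow> 'm"
    and sN :: "'n::ab_group_add \<Rightarrow> 'r \<Rightarrow> 'n"
    and M :: "'m set" and N :: "'n set"
    and \<tau> :: "'i::wellorder" and Nf :: "'i \<Rightarrow> 'n set"
  assumes "right_module sM M"
    and "right_module sN N"
    and "filtration sN N \<tau> Nf"
    and "finitely_generated sM M"
    and "\<forall>a<\<tau>. \<forall>K f. submodule sN K (Nf (osucc a)) \<and> Nf a \<subseteq> K \<and>
            quot_hom sM M sN (Nf (osucc a)) K f \<longrightarrow>
            (\<exists>g. mod_hom sM M sN (Nf (osucc a)) g \<and> (\<forall>x\<in>M. f x = coset (g x) K))"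
  shows "N_projective sM M sN N"
  unfolding N_projective_def
proof (intro allI impI, elim conjE)
  fix P f assume PN: "submodule sN P N" and f: "quot_hom sM M sN N P f"
  have P: "right_module sN P" using PN by (simp add: submodule_def)
  have meet: "\<forall>x\<in>M. f x \<inter> Nf \<tau> \<noteq> {}"
  proof
    fix x assume "x \<in> M"
    then obtain n where "n \<in> N" "f x = coset n P" using f unfolding quot_hom_def quot_def by blast
    then show "f x \<inter> Nf \<tau> \<noteq> {}" using filtration_top[OF assms(3)] coset_self[OF P] by blast
  qed
  have proj: "\<And>a K g. a < \<tau> \<Longrightarrow> submodule sN K (Nf (osucc a)) \<Longrightarrow> Nf a \<subseteq> K \<Longrightarrow>
      quot_hom sM M sN (Nf (osucc a)) K g \<Longrightarrow> liftable sM M sN (Nf (osucc a)) K g"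
    using assms(5) unfolding liftable_def by blast
  have "liftable sM M sN N P f"
    using liftable_if_meets_filtration[OF assms(1,2) PN assms(4,3) proj order.refl f meet] .
  then show "\<exists>g. mod_hom sM M sN N g \<and> (\<forall>x\<in>M. f x = coset (g x) P)"
    unfolding liftable_def .
qed

end
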